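(* Let $\bar y\in[0,1]^M$ with $\sum_{j=1}^M \bar y_j = p$, and for each $i\in[N]$ let $\tilde k_i$ be as defined in the context. Then for every $i\in[N]$ the vector $\bar v_i=(\bar v_i^1,\dots,\bar v_i^{K_i})$ given by $$\bar v_i^k=\begin{cases} D_i^{\tilde k_i+1}-D_i^k & \text{if } k\le \tilde k_i,\\ 0 & \text{otherwise},\end{cases}\qquad k\in[K_i],$$ is an optimal solution of $(DSP_i(\bar y))$, and its objective value equals the optimal value of $(SP_i(\bar y))$.
   Context: Data: clients $i\in[N]$, candidate sites $j\in[M]$ (where $[n]=\{1,\dots,n\}$), nonnegative distances $d_{ij}$, and an integer $p$ with $1\le p\le M$. For each client $i$, let $K_i$ be the number of distinct values among $\{d_{ij}: j\in[M]\}$ and let $D_i^1<\dots<D_i^{K_i}$ be these distinct values sorted increasingly. For $\bar y\in[0,1]^M$, the sub-problem $(SP_i(\bar y))$ is the linear program in variables $z_i^1,\dots,z_i^{K_i}$: minimize $D_i^1+\sum_{k=1}^{K_i-1}(D_i^{k+1}-D_i^k)z_i^k$ subject to $z_i^1\ge 1-\sum_{j:d_{ij}=D_i^1}\bar y_j$; $z_i^k-z_i^{k-1}\ge -\sum_{j:d_{ij}=D_i^k}\bar y_j$ for $k=2,\dots,K_i$; $z_i^k\ge 0$ for $k\in[K_i]$. Its dual $(DSP_i(\bar y))$ is the linear program in variables $v_i^1,\dots,v_i^{K_i}$: maximize $D_i^1+v_i^1\big(1-\sum_{j:d_{ij}=D_i^1}\bar y_j\big)-\sum_{k=2}^{K_i}v_i^k\sum_{j:d_{ij}=D_i^k}\bar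 y_j$ subject to $v_i^k-v_i^{k+1}\le D_i^{k+1}-D_i^k$ for $k\in[K_i-1]$; $v_i^k\ge 0$ for $k\in[K_i]$. Index $\tilde k_i$: $\tilde k_i=0$ if $\sum_{j:d_{ij}=D_i^1}\bar y_j\ge 1$; otherwise $\tilde k_i=\max\{k\in[K_i]: 1-\sum_{j:d_{ij}\le D_i^k}\bar y_j>0\}$. *)

theory Defs
  imports Complex_Main
begin

text \<open>Sites are indexed by {1..M}; d i j is the distance from client i to site j.
  D d M i k is the k-th smallest distinct distance (k = 1..K d M i) of client i.\<close>

definition K :: "(nat \<Rightarrow> nat \<Rightarrow> real) \<Rightarrow> nat \<Rightarrow> nat \<Rightarrow> nat" where
  "K d M i = card (d i ` {1..M})"

definition D :: "(nat \<Rightarrow> nat \<Rightarrow> real) \<Rightarrow> nat \<Rightarrow> nat \<Rightarrow> nat \<Rightarrow> real" where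
  "D d M i k = sorted_list_of_set (d i ` {1..M}) ! (k - 1)"

definition S :: "(nat \<Rightarrow> nat \<Rightarrow> real) \<Rightarrow> nat \<Rightarrow> (nat \<Rightarrow> real) \<Rightarrow> nat \<Rightarrow> nat \<Rightarrow> real" where
  "S d M y i k = (\<Sum>j\<in>{j\<in>{1..M}. d i j = D d M i k}. y j)"

definition SP_feasible :: "(nat \<Rightarrow> nat \<Rightarrow> real) \<Rightarrow> nat \<Rightarrow> (nat \<Rightarrow> real) \<Rightarrow> nat \<Rightarrow> (nat \<Rightarrow> real) \<Rightarrow> bool" where
  "SP_feasible d M y i z \<longleftrightarrow>
     z 1 \<ge> 1 - S d M y i 1 \<and>
     (\<forall>k\<in>{2..K d M i}. z k - z (k - 1) \<ge> - S d M y i k) \<and>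
     (\<forall>k\<in>{1..K d M i}. z k \<ge> 0)"

definition SP_obj :: "(nat \<Rightarrow> nat \<Rightarrow> real) \<Rightarrow> nat \<Rightarrow> nat \<Rightarrow> (nat \<Rightarrow> real) \<Rightarrow> real" where
  "SP_obj d M i z = D d M i 1 +
     (\<Sum>k\<in>{1..K d M i - 1}. (D d M i (k + 1) - D d M i k) * z k)"

definition DSP_feasible :: "(nat \<Rightarrow> nat \<Rightarrow> real) \<Rightarrow> nat \<Rightarrow> nat \<Rightarrow> (nat \<Rightarrow> real) \<Rightarrow> bool" where
  "DSP_feasible d M i v \<longleftrightarrow>
     (\<forall>k\<in>{1..K d M i - 1}. v k - v (k + 1) \<le> D d M i (k + 1) - D d M i k) \<and>
     (\<forall>k\<in>{1..K d M i}. v k \<ge> 0)"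

definition DSP_obj :: "(nat \<Rightarrow> nat \<Rightarrow> real) \<Rightarrow> nat \<Rightarrow> (nat \<Rightarrow> real) \<Rightarrow> nat \<Rightarrow> (nat \<Rightarrow> real) \<Rightarrow> real" where
  "DSP_obj d M y i v = D d M i 1 + v 1 * (1 - S d M y i 1)
     - (\<Sum>k\<in>{2..K d M i}. v k * S d M y i k)"

definition ktilde :: "(nat \<Rightarrow> nat \<Rightarrow> real) \<Rightarrow> nat \<Rightarrow> (nat \<Rightarrow> real) \<Rightarrow> nat \<Rightarrow> nat" where
  "ktilde d M y i =
     (if S d M y i 1 \<ge> 1 then 0
      else Max {k\<in>{1..K d M i}. 1 - (\<Sum>j\<in>{j\<in>{1..M}. d i j \<le> D d M i k}. y j) > 0})"

definition vbar :: "(nat \<Rightarrow> nat \<Rightarrow> real) \<Rightarrow> nat \<Rightarrow> (nat \<Rightarrow> real) \<Rightarrow> nat \<Rightarrow> nat \<Rightarrow> real" where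
  "vbar d M y i k =
     (if k \<le> ktilde d M y i then D d M i (ktilde d M y i + 1) - D d M i k else 0)"

end

theory Submission
  imports Defs
begin

text \<open>Write \<open>S_le k\<close> for the mass of \<open>y\<close> within distance \<open>D\<^sup>k\<close>; it increases in \<open>k\<close>
  from \<open>S\<^sup>1\<close> to \<open>\<Sum> y \<ge> 1\<close>, and \<open>ktilde\<close> is the last index with \<open>S_le k < 1\<close>. The primal
  point \<open>z\<^sup>k = 1 - S_le k\<close> for \<open>k \<le> ktilde\<close>, \<open>z\<^sup>k = 0\<close> otherwise, is feasible and satisfies
  complementary slackness with \<open>vbar\<close>. Summation by parts expresses the duality gap as a sum
  of products of slacks, which gives weak duality and equality of the two objectives at once.\<close>

lemma sum_by_parts_nat:
  fixes v z :: "nat \<Rightarrow> 'a::comm_ring"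
  shows "v 1 * z 1 + (\<Sum>k=2..n+1. v k * (z k - z (k-1)))
     = (\<Sum>k=1..n. (v k - v (k+1)) * z k) + v (n+1) * z (n+1)"
proof (induction n)
  case 0
  then show ?case by simp
next
  case (Suc n)
  then show ?case by (simp add: sum.cl_ivl_Suc algebra_simps)
qed

lemma D_less_D:
  assumes "1 \<le> k" "k < l" "l \<le> K d M i"
  shows "D d M i k < D d M i l"
proof -
  let ?L = "sorted_list_of_set (d i ` {1..M})"
  have "length ?L = K d M i" by (simp add: K_def)
  with assms show ?thesis
    using sorted_wrt_nth_less[OF strict_sorted_list_of_set[of "d i ` {1..M}"], of "k-1" "l-1"]
    by (simp add: D_def)
qed

lemma D_le_D: "1 \<le> k \<Longrightarrow> k \<le> l \<Longrightarrow> l \<le> K d M i \<Longrightarrow> D d M i k \<le> D d M i l"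
  using D_less_D[of k l d M i] by (cases "k = l") auto

lemma distance_eq_D:
  assumes "j \<in> {1..M}"
  obtains k where "k \<in> {1..K d M i}" "d i j = D d M i k"
proof -
  let ?L = "sorted_list_of_set (d i ` {1..M})"
  from assms have "d i j \<in> set ?L" by simp
  then obtain n where "n < length ?L" "?L ! n = d i j" by (metis in_set_conv_nth)
  then show ?thesis
    using that[of "n+1"] by (simp add: K_def D_def)
qed

lemma K_pos: "1 \<le> M \<Longrightarrow> 1 \<le> K d M i"
  by (simp add: K_def Suc_le_eq card_gt_0_iff)

lemma S_nonneg: "(\<And>j. j \<in> {1..M} \<Longrightarrow> 0 \<le> y j) \<Longrightarrow> 0 \<le> S d M y i k"
  unfolding S_def by (rule sum_nonneg) auto

definition S_le :: "(nat \<Rightarrow> nat \<Rightarrow> real) \<Rightarrow> nat \<Rightarrow> (nat \<Rightarrow> real) \<Rightarrow> nat \<Rightarrow> nat \<Rightarrow> real" where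
  "S_le d M y i k = (\<Sum>j\<in>{j\<in>{1..M}. d i j \<le> D d M i k}. y j)"

lemma ktilde_eq_S_le:
  "ktilde d M y i =
     (if S d M y i 1 \<ge> 1 then 0 else Max {k\<in>{1..K d M i}. 1 - S_le d M y i k > 0})"
  by (simp add: ktilde_def S_le_def)

lemma S_le_1: "S_le d M y i 1 = S d M y i 1"
proof -
  have D_1_le: "D d M i 1 \<le> d i j" if j: "j \<in> {1..M}" for j
  proof -
    obtain k where "k \<in> {1..K d M i}" "d i j = D d M i k"
      using distance_eq_D[OF j] .
    then show ?thesis using D_le_D[of 1 k d M i] by simp
  qed
  have "{j\<in>{1..M}. d i j \<le> D d M i 1} = {j\<in>{1..M}. d i j = D d M i 1}"
  proof (intro Collect_cong conj_cong refl)
    fix j assume "j \<in> {1..M}"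
    then show "d i j \<le> D d M i 1 \<longleftrightarrow> d i j = D d M i 1" using D_1_le by force
  qed
  then show ?thesis by (simp add: S_le_def S_def)
qed

lemma S_le_step:
  assumes "2 \<le> k" "k \<le> K d M i"
  shows "S_le d M y i k = S_le d M y i (k-1) + S d M y i k"
proof -
  have gap: "D d M i (k-1) < D d M i k" using D_less_D assms by simp
  have "d i j \<le> D d M i (k-1)" if "j \<in> {1..M}" "d i j < D d M i k" for j
  proof -
    obtain l where l: "l \<in> {1..K d M i}" "d i j = D d M i l"
      using distance_eq_D[OF \<open>j \<in> {1..M}\<close>] .
    have "l \<le> k-1"
    proof (rule ccontr)
      assume "\<not> l \<le> k-1"
      then have "D d M i k \<le> D d M i l" using D_le_D[of k l d M i] l assms by simp
      with that(2) l(2) show False by linarith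
    qed
    then show ?thesis using D_le_D[of l "k-1" d M i] l assms by simp
  qed
  then have split: "{j\<in>{1..M}. d i j \<le> D d M i k}
      = {j\<in>{1..M}. d i j \<le> D d M i (k-1)} \<union> {j\<in>{1..M}. d i j = D d M i k}"
    using gap by (auto simp: le_less)
  have "{j\<in>{1..M}. d i j \<le> D d M i (k-1)} \<inter> {j\<in>{1..M}. d i j = D d M i k} = {}"
    using gap by auto
  then show ?thesis
    unfolding S_le_def S_def split by (intro sum.union_disjoint) auto
qed

lemma S_le_K: "S_le d M y i (K d M i) = (\<Sum>j\<in>{1..M}. y j)"
proof -
  have "d i j \<le> D d M i (K d M i)" if j: "j \<in> {1..M}" for j
  proof -
    obtain k where "k \<in> {1..K d M i}" "d i j = D d M i k"
      using distance_eq_D[OF j] .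
    then show ?thesis using D_le_D[of k "K d M i" d M i] by simp
  qed
  then have "{j\<in>{1..M}. d i j \<le> D d M i (K d M i)} = {1..M}" by blast
  then show ?thesis by (simp add: S_le_def)
qed

lemma S_le_mono:
  assumes "\<And>j. j \<in> {1..M} \<Longrightarrow> 0 \<le> y j" "1 \<le> k" "k \<le> l" "l \<le> K d M i"
  shows "S_le d M y i k \<le> S_le d M y i l"
  unfolding S_le_def using assms D_le_D[of k l d M i]
  by (intro sum_mono2) auto

lemma ktilde_threshold:
  assumes y_nonneg: "\<And>j. j \<in> {1..M} \<Longrightarrow> 0 \<le> y j"
    and total: "1 \<le> (\<Sum>j\<in>{1..M}. y j)"
  shows "ktilde d M y i < K d M i"
    and "\<And>k. 1 \<le> k \<Longrightarrow> k \<le> ktilde d M y i \<Longrightarrow> S_le d M y i k < 1"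
    and "1 \<le> S_le d M y i (ktilde d M y i + 1)"
proof -
  let ?kt = "ktilde d M y i" and ?K = "K d M i" and ?C = "S_le d M y i"
  have "1 \<le> M" using total by (cases M) auto
  then have K_pos: "1 \<le> ?K" by (rule K_pos)
  have "?kt < ?K \<and> (\<forall>k. 1 \<le> k \<longrightarrow> k \<le> ?kt \<longrightarrow> ?C k < 1) \<and> 1 \<le> ?C (?kt+1)"
  proof (cases "S d M y i 1 \<ge> 1")
    case True
    then show ?thesis using K_pos S_le_1[of d M y i] by (simp add: ktilde_eq_S_le)
  next
    case False
    define Q where "Q = {k\<in>{1..?K}. 1 - ?C k > 0}"
    have fin_Q: "finite Q" by (simp add: Q_def)
    have kt: "?kt = Max Q" using False by (simp add: ktilde_eq_S_le Q_def)
    have "1 \<in> Q" using False K_pos S_le_1[of d M y i] by (simp add: Q_def)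
    then have kt_in: "?kt \<in> Q" unfolding kt using fin_Q by (intro Max_in) auto
    then have kt_le: "?kt \<le> ?K" by (simp add: Q_def)
    have "?K \<notin> Q" using total by (simp add: Q_def S_le_K)
    with kt_in kt_le have kt_less: "?kt < ?K" by (cases "?kt = ?K") auto
    have "?kt + 1 \<notin> Q"
    proof
      assume "?kt + 1 \<in> Q"
      then have "?kt + 1 \<le> Max Q" using Max_ge[OF fin_Q] by blast
      with kt show False by simp
    qed
    then have "1 \<le> ?C (?kt+1)" using kt_less by (simp add: Q_def)
    moreover have "?C k < 1" if "1 \<le> k" "k \<le> ?kt" for k
    proof -
      have "?C k \<le> ?C ?kt" using S_le_mono[OF y_nonneg that] kt_le by simp
      moreover have "?C ?kt < 1" using kt_in by (simp add: Q_def)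
      ultimately show ?thesis by simp
    qed
    ultimately show ?thesis using kt_less by simp
  qed
  then show "?kt < ?K" "\<And>k. 1 \<le> k \<Longrightarrow> k \<le> ?kt \<Longrightarrow> ?C k < 1" "1 \<le> ?C (?kt+1)"
    by auto
qed

text \<open>The dual as stated omits the constraint \<open>v\<^sup>K \<le> 0\<close> belonging to the variable \<open>z\<^sup>K\<close>,
  which does not occur in the primal objective; this is why \<open>v\<^sup>K z\<^sup>K\<close> appears below.\<close>

lemma duality_gap:
  assumes "1 \<le> K d M i"
  shows "SP_obj d M i z + v (K d M i) * z (K d M i) - DSP_obj d M y i v =
     v 1 * (z 1 - (1 - S d M y i 1))
     + (\<Sum>k=2..K d M i. v k * (z k - z (k-1) + S d M y i k))
     + (\<Sum>k=1..K d M i - 1. (D d M i (k+1) - D d M i k - (v k - v (k+1))) * z k)"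
proof -
  obtain n where n: "K d M i = n + 1" using assms by (metis add.commute le_Suc_ex)
  show ?thesis
    using sum_by_parts_nat[of v z n]
    by (simp add: n SP_obj_def DSP_obj_def algebra_simps sum.distrib sum_subtractf)
qed

lemma weak_duality:
  assumes "1 \<le> K d M i" and v: "DSP_feasible d M i v" and z: "SP_feasible d M y i z"
  shows "DSP_obj d M y i v \<le> SP_obj d M i z + v (K d M i) * z (K d M i)"
proof -
  have v_step: "\<And>k. k \<in> {1..K d M i - 1} \<Longrightarrow> v k - v (k+1) \<le> D d M i (k+1) - D d M i k"
    and v_nonneg: "\<And>k. k \<in> {1..K d M i} \<Longrightarrow> 0 \<le> v k"
    using v by (auto simp: DSP_feasible_def)
  have z_1: "1 - S d M y i 1 \<le> z 1"
    and z_step: "\<And>k. k \<in> {2..K d M i} \<Longrightarrow> - S d M y i k \<le> z k - z (k-1)"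
    and z_nonneg: "\<And>k. k \<in> {1..K d M i} \<Longrightarrow> 0 \<le> z k"
    using z by (auto simp: SP_feasible_def)
  have "0 \<le> v 1 * (z 1 - (1 - S d M y i 1))"
    using v_nonneg[of 1] z_1 assms(1) by simp
  moreover have "0 \<le> (\<Sum>k=2..K d M i. v k * (z k - z (k-1) + S d M y i k))"
  proof (intro sum_nonneg mult_nonneg_nonneg)
    fix k assume "k \<in> {2..K d M i}"
    then show "0 \<le> v k" "0 \<le> z k - z (k-1) + S d M y i k"
      using v_nonneg[of k] z_step[of k] by auto
  qed
  moreover have "0 \<le> (\<Sum>k=1..K d M i - 1. (D d M i (k+1) - D d M i k - (v k - v (k+1))) * z k)"
  proof (intro sum_nonneg mult_nonneg_nonneg)
    fix k assume "k \<in> {1..K d M i - 1}"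
    then show "0 \<le> D d M i (k+1) - D d M i k - (v k - v (k+1))" "0 \<le> z k"
      using v_step[of k] z_nonneg[of k] by auto
  qed
  ultimately show ?thesis using duality_gap[OF assms(1), of z v y] by linarith
qed

definition zbar :: "(nat \<Rightarrow> nat \<Rightarrow> real) \<Rightarrow> nat \<Rightarrow> (nat \<Rightarrow> real) \<Rightarrow> nat \<Rightarrow> nat \<Rightarrow> real" where
  "zbar d M y i k = (if k \<le> ktilde d M y i then 1 - S_le d M y i k else 0)"

lemma DSP_feasible_vbar:
  assumes "ktilde d M y i < K d M i"
  shows "DSP_feasible d M i (vbar d M y i)"
  unfolding DSP_feasible_def
proof (intro conjI ballI)
  fix k assume k: "k \<in> {1..K d M i - 1}"
  consider "k + 1 \<le> ktilde d M y i" | "k = ktilde d M y i" | "ktilde d M y i < k"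
    by linarith
  then show "vbar d M y i k - vbar d M y i (k+1) \<le> D d M i (k+1) - D d M i k"
    by cases (use k D_le_D[of k "k+1" d M i] in \<open>auto simp: vbar_def\<close>)
next
  fix k assume "k \<in> {1..K d M i}"
  then show "0 \<le> vbar d M y i k"
    using assms D_le_D[of k "ktilde d M y i + 1" d M i] by (simp add: vbar_def)
qed

lemma SP_feasible_zbar:
  assumes y_nonneg: "\<And>j. j \<in> {1..M} \<Longrightarrow> 0 \<le> y j"
    and total: "1 \<le> (\<Sum>j\<in>{1..M}. y j)"
  shows "SP_feasible d M y i (zbar d M y i)"
proof -
  let ?kt = "ktilde d M y i" and ?z = "zbar d M y i"
  note kt = ktilde_threshold[OF y_nonneg total, where d = d and i = i]
  show ?thesis
    unfolding SP_feasible_def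
  proof (intro conjI ballI)
    show "1 - S d M y i 1 \<le> ?z 1"
      using kt(3) S_le_1[of d M y i] by (cases ?kt) (auto simp: zbar_def)
  next
    fix k assume k: "k \<in> {2..K d M i}"
    have step: "S_le d M y i k = S_le d M y i (k-1) + S d M y i k"
      using S_le_step[of k d M i y] k by simp
    consider "k \<le> ?kt" | "k = ?kt + 1" | "?kt + 1 < k"
      by linarith
    then show "- S d M y i k \<le> ?z k - ?z (k-1)"
      by cases (use step kt(3) S_nonneg[OF y_nonneg] in \<open>auto simp: zbar_def\<close>)
  next
    fix k assume k: "k \<in> {1..K d M i}"
    show "0 \<le> ?z k"
    proof (cases "k \<le> ?kt")
      case True
      then show ?thesis using kt(2)[of k] k by (simp add: zbar_def)
    qed (simp add: zbar_def)
  qed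
qed

text \<open>Complementary slackness: every term of the duality gap vanishes.\<close>

lemma DSP_obj_vbar_eq_SP_obj_zbar:
  assumes y_nonneg: "\<And>j. j \<in> {1..M} \<Longrightarrow> 0 \<le> y j"
    and total: "1 \<le> (\<Sum>j\<in>{1..M}. y j)"
  shows "DSP_obj d M y i (vbar d M y i) = SP_obj d M i (zbar d M y i)"
proof -
  let ?v = "vbar d M y i" and ?z = "zbar d M y i" and ?K = "K d M i"
  note kt_less = ktilde_threshold(1)[OF y_nonneg total, where d = d and i = i]
  have K_pos: "1 \<le> ?K" using kt_less by simp
  have "?v 1 * (?z 1 - (1 - S d M y i 1)) = 0"
    using S_le_1[of d M y i] by (simp add: vbar_def zbar_def)
  moreover have "(\<Sum>k=2..?K. ?v k * (?z k - ?z (k-1) + S d M y i k)) = 0"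
  proof (intro sum.neutral ballI)
    fix k assume "k \<in> {2..?K}"
    then show "?v k * (?z k - ?z (k-1) + S d M y i k) = 0"
    proof (cases "k \<le> ktilde d M y i")
      case True
      then show ?thesis using S_le_step[of k d M i y] \<open>k \<in> {2..?K}\<close> by (auto simp: zbar_def)
    qed (simp add: vbar_def)
  qed
  moreover have "(\<Sum>k=1..?K - 1. (D d M i (k+1) - D d M i k - (?v k - ?v (k+1))) * ?z k) = 0"
  proof (intro sum.neutral ballI)
    fix k assume "k \<in> {1..?K - 1}"
    consider "k + 1 \<le> ktilde d M y i" | "k = ktilde d M y i" | "ktilde d M y i < k"
      by linarith
    then show "(D d M i (k+1) - D d M i k - (?v k - ?v (k+1))) * ?z k = 0"
      by cases (auto simp: vbar_def zbar_def)
  qed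
  moreover have "?v ?K * ?z ?K = 0" using kt_less by (simp add: zbar_def)
  ultimately show ?thesis using duality_gap[OF K_pos, of ?z ?v y] by linarith
qed

theorem proposition1:
  fixes N M p :: nat and d :: "nat \<Rightarrow> nat \<Rightarrow> real" and y :: "nat \<Rightarrow> real" and i :: nat
  assumes d_nonneg: "\<And>i j. i \<in> {1..N} \<Longrightarrow> j \<in> {1..M} \<Longrightarrow> d i j \<ge> 0"
    and p_bounds: "1 \<le> p" "p \<le> M"
    and y_range: "\<And>j. j \<in> {1..M} \<Longrightarrow> 0 \<le> y j \<and> y j \<le> 1"
    and y_sum: "(\<Sum>j\<in>{1..M}. y j) = real p"
    and i_in: "i \<in> {1..N}"
  shows "DSP_feasible d M i (vbar d M y i)
    \<and> (\<forall>v. DSP_feasible d M i v \<longrightarrow> DSP_obj d M y i v \<le> DSP_obj d M y i (vbar d M y i))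
    \<and> (\<exists>z. SP_feasible d M y i z \<and> SP_obj d M i z = DSP_obj d M y i (vbar d M y i))
    \<and> (\<forall>z. SP_feasible d M y i z \<longrightarrow> DSP_obj d M y i (vbar d M y i) \<le> SP_obj d M i z)"
proof -
  have y_nonneg: "\<And>j. j \<in> {1..M} \<Longrightarrow> 0 \<le> y j" using y_range by blast
  have total: "1 \<le> (\<Sum>j\<in>{1..M}. y j)" using y_sum p_bounds by simp
  have kt_less: "ktilde d M y i < K d M i"
    by (rule ktilde_threshold(1)[OF y_nonneg total])
  then have K_pos: "1 \<le> K d M i" by simp
  have v_feas: "DSP_feasible d M i (vbar d M y i)" using kt_less by (rule DSP_feasible_vbar)
  have z_feas: "SP_feasible d M y i (zbar d M y i)" using y_nonneg total by (rule SP_feasible_zbar)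
  have opt: "DSP_obj d M y i (vbar d M y i) = SP_obj d M i (zbar d M y i)"
    using y_nonneg total by (rule DSP_obj_vbar_eq_SP_obj_zbar)
  have v_K: "vbar d M y i (K d M i) = 0" and z_K: "zbar d M y i (K d M i) = 0"
    using kt_less by (simp_all add: vbar_def zbar_def)
  show ?thesis
  proof (intro conjI allI impI)
    fix v assume "DSP_feasible d M i v"
    from weak_duality[OF K_pos this z_feas]
    show "DSP_obj d M y i v \<le> DSP_obj d M y i (vbar d M y i)" using z_K opt by simp
  next
    fix z assume "SP_feasible d M y i z"
    from weak_duality[OF K_pos v_feas this]
    show "DSP_obj d M y i (vbar d M y i) \<le> SP_obj d M i z" using v_K by simp
  qed (use v_feas z_feas opt in auto)
qed

end
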